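(* Let $X$ be a strictly convex Banach space and let $f: X \to X$ be Lipschitz continuous with constant $L$, i.e. $\|f(x)-f(y)\|_X \le L\|x-y\|_X$ for all $x,y\in X$. Let $x:\mathbb{R}\to X$ be a non-constant $T$-periodic solution (with $T>0$) of the ordinary differential equation $\dot x = f(x)$. Then $$TL > 6.$$
   Context: A Banach space is strictly convex if its closed unit ball is a strictly convex set, i.e. $\|x\|=\|y\|=1$ and $x\neq y$ imply $\|(x+y)/2\|<1$; equivalently, $\|u+v\|=\|u\|+\|v\|$ with $u,v\neq 0$ implies $u=\lambda v$ for some $\lambda>0$. *)

theory Defs
  imports "HOL-Analysis.Analysis"
begin

definition strictly_convex_space :: "'a::real_normed_vector itself \<Rightarrow> bool" where
  "strictly_convex_space _ \<longleftrightarrow>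
     (\<forall>u v :: 'a. norm u = 1 \<and> norm v = 1 \<and> u \<noteq> v \<longrightarrow> norm ((u + v) /\<^sub>R 2) < 1)"

end

theory Submission
  imports Defs
begin

(* For a time lag h let D h be
   the maximal displacement max_s |x(s+h) - x(s)| and J = int_0^1 D(T theta) d theta > 0.  For a weight
   rho in [0, 1] the curve theta |-> (1 - rho) x(s + T rho theta) + rho x(s - T (1 - rho) theta) joins x(s)
   to x(s + T rho), and its velocity has norm at most T rho (1 - rho) L D(T theta).  Integrating in theta
   gives D(T rho) <= T L J rho (1 - rho), and integrating in rho gives J <= T L J / 6, i.e. T L >= 6.
   If T L = 6 all these inequalities are equalities; strict convexity then forces the symmetric
   sums x(s0 + T rho/2) + x(s0 - T rho/2) to be affine in rho, and comparing slopes at rho = 0 yields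
   x(s0 + T/2) = x(s0), contradicting D(T/2) = 3J/2 > 0. *)

lemma strictly_convex_equal_summands:
  fixes P Q :: "'a::real_normed_vector"
  assumes sc: "strictly_convex_space TYPE('a)"
    and m: "m > 0" and P: "norm P \<le> m" and Q: "norm Q \<le> m" and PQ: "norm (P + Q) = 2 * m"
  shows "P = Q"
proof (rule ccontr)
  assume "P \<noteq> Q"
  have "norm P = m" "norm Q = m"
    using P Q PQ norm_triangle_ineq[of P Q] by linarith+
  define u v where "u = P /\<^sub>R m" and "v = Q /\<^sub>R m"
  have "norm u = 1" "norm v = 1" "u \<noteq> v"
    unfolding u_def v_def using \<open>norm P = m\<close> \<open>norm Q = m\<close> \<open>P \<noteq> Q\<close> m by auto
  hence "norm ((u + v) /\<^sub>R 2) < 1"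
    using sc unfolding strictly_convex_space_def by blast
  moreover have "u + v = (P + Q) /\<^sub>R m"
    unfolding u_def v_def by (simp add: scaleR_add_right)
  ultimately show False using PQ m by simp
qed

lemma periodic_shift_int:
  fixes g :: "real \<Rightarrow> 'b"
  assumes period: "\<And>t. g (t + T) = g t"
  shows "g (t + of_int k * T) = g t"
proof (induction k arbitrary: t rule: int_induct[where k = 0])
  case base
  then show ?case by simp
next
  case (step1 i)
  have "g (t + of_int (i + 1) * T) = g ((t + of_int i * T) + T)"
    by (simp add: algebra_simps)
  then show ?case using period step1.IH by simp
next
  case (step2 i)
  have "g (t + of_int (i - 1) * T) = g ((t + of_int (i - 1) * T) + T)"
    by (simp only: period)
  also have "\<dots> = g (t + of_int i * T)"
    by (simp add: algebra_simps)
  finally show ?case using step2.IH by simp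
qed

(* A T-periodic function takes all its values on one period [0, T]; this is how compactness
   arguments (boundedness, attained suprema) are transferred from [0, T] to the whole line. *)
lemma periodic_range:
  fixes g :: "real \<Rightarrow> 'b"
  assumes T: "T > 0" and period: "\<And>t. g (t + T) = g t"
  shows "range g = g ` {0..T}"
proof -
  have "g t \<in> g ` {0..T}" for t
  proof -
    define k where "k = \<lfloor>t / T\<rfloor>"
    have "of_int k * T \<le> t" "t < (of_int k + 1) * T"
      unfolding k_def using floor_divide_lower[OF T] floor_divide_upper[OF T] by auto
    hence "t - of_int k * T \<in> {0..T}" by (simp add: algebra_simps)
    moreover have "g (t - of_int k * T) = g t"
      using periodic_shift_int[where g = g, OF period, of "t - of_int k * T" k] by simp
    ultimately show ?thesis by (metis image_eqI)
  qed
  thus ?thesis by auto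
qed

(* If a continuous function lies below another on [a, b] but its integral is at least as large,
   the two functions agree on [a, b]; this is how every equality case below is extracted. *)
lemma continuous_le_integral_ge_imp_eq:
  fixes \<phi> \<psi> :: "real \<Rightarrow> real"
  assumes ab: "a < b"
    and cont: "continuous_on {a..b} \<phi>" "continuous_on {a..b} \<psi>"
    and le: "\<And>t. t \<in> {a..b} \<Longrightarrow> \<phi> t \<le> \<psi> t"
    and I: "(\<phi> has_integral I) {a..b}" and K: "(\<psi> has_integral K) {a..b}" and KI: "K \<le> I"
    and t: "t \<in> {a..b}"
  shows "\<phi> t = \<psi> t"
proof -
  define \<delta> where "\<delta> t = \<psi> t - \<phi> t" for t
  have \<delta>_int: "(\<delta> has_integral (K - I)) {a..b}"
    unfolding \<delta>_def using K I by (rule has_integral_diff)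
  have "0 \<le> K - I"
    by (rule has_integral_nonneg[OF \<delta>_int]) (use le in \<open>simp add: \<delta>_def\<close>)
  with KI \<delta>_int have "(\<delta> has_integral 0) (cbox a b)" by simp
  hence "\<delta> t = 0"
    by (rule has_integral_0_cbox_imp_0[rotated 2])
       (use ab cont le t in \<open>auto simp: \<delta>_def intro: continuous_on_diff\<close>)
  thus ?thesis by (simp add: \<delta>_def)
qed

lemma norm_increment_le_integral:
  fixes F :: "real \<Rightarrow> 'a::banach"
  assumes ab: "a \<le> b"
    and F: "\<And>t. t \<in> {a..b} \<Longrightarrow> (F has_vector_derivative F' t) (at t within {a..b})"
    and g: "(g has_integral I) {a..b}"
    and bound: "\<And>t. t \<in> {a..b} \<Longrightarrow> norm (F' t) \<le> g t"
  shows "norm (F b - F a) \<le> I"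
proof -
  have "(F' has_integral (F b - F a)) {a..b}"
    by (rule fundamental_theorem_of_calculus[OF ab F])
  hence "norm (integral {a..b} F') \<le> integral {a..b} g"
    using g bound by (intro integral_norm_bound_integral) auto
  thus ?thesis
    using \<open>(F' has_integral (F b - F a)) {a..b}\<close> g by (simp add: integral_unique)
qed

lemma derivative_at_0_of_right_affine:
  fixes g :: "real \<Rightarrow> 'a::real_normed_vector"
  assumes g: "(g has_vector_derivative g') (at 0)" and \<epsilon>: "\<epsilon> > 0"
    and affine: "\<And>\<rho>. \<rho> \<in> {0<..<\<epsilon>} \<Longrightarrow> g \<rho> = g 0 + \<rho> *\<^sub>R c"
  shows "g' = c"
proof -
  let ?S = "{0..\<epsilon>/2}"
  have affine0: "g \<rho> = g 0 + \<rho> *\<^sub>R c" if "\<rho> \<in> {0..<\<epsilon>}" for \<rho>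
    using affine that by (cases "\<rho> = 0") auto
  have line: "((\<lambda>\<rho>. g 0 + \<rho> *\<^sub>R c) has_vector_derivative c) (at 0 within ?S)"
    unfolding has_vector_derivative_def by (auto intro!: derivative_eq_intros)
  have "(g has_vector_derivative c) (at 0 within ?S)"
  proof (rule has_vector_derivative_transform_within[OF line, of "\<epsilon>/2"])
    fix \<rho> assume "\<rho> \<in> ?S" "dist \<rho> 0 < \<epsilon>/2"
    then show "g 0 + \<rho> *\<^sub>R c = g \<rho>" using \<epsilon> by (intro affine0[symmetric]) auto
  qed (use \<epsilon> in auto)
  moreover have "(g has_vector_derivative g') (at 0 within ?S)"
    using g by (rule has_vector_derivative_at_within)
  moreover have "at (0::real) within ?S \<noteq> bot"
    using \<epsilon> by (simp add: at_within_Icc_at_right)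
  ultimately show ?thesis by (metis vector_derivative_unique_within)
qed

lemma parabola_has_integral:
  fixes a b :: real
  assumes "a \<le> b"
  shows "((\<lambda>\<theta>. \<theta> * (1 - \<theta>)) has_integral ((b^2/2 - b^3/3) - (a^2/2 - a^3/3))) {a..b}"
proof -
  have "((\<lambda>\<theta>::real. \<theta>^2/2 - \<theta>^3/3) has_vector_derivative (t * (1 - t))) (at t within {a..b})" for t
    unfolding has_real_derivative_iff_has_vector_derivative[symmetric]
    by (auto intro!: derivative_eq_intros simp: power2_eq_square algebra_simps)
  from fundamental_theorem_of_calculus[OF assms this] show ?thesis by simp
qed

lemma parabola_has_integral_01: "((\<lambda>\<theta>::real. \<theta> * (1 - \<theta>)) has_integral 1/6) {0..1}"
  using parabola_has_integral[of 0 1] by simp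

locale periodic_orbit =
  fixes f :: "'a::banach \<Rightarrow> 'a" and x :: "real \<Rightarrow> 'a" and L T :: real
  assumes lipschitz: "\<And>u v. norm (f u - f v) \<le> L * norm (u - v)"
    and period_pos: "T > 0"
    and ode: "\<And>t. (x has_vector_derivative f (x t)) (at t)"
    and periodic: "\<And>t. x (t + T) = x t"
    and nonconstant: "\<exists>s t. x s \<noteq> x t"
begin

lemma lipschitz_nonneg: "L \<ge> 0"
proof -
  obtain s t where "x s \<noteq> x t" using nonconstant by blast
  hence "0 < norm (x s - x t)" by simp
  moreover have "0 \<le> L * norm (x s - x t)"
    using lipschitz[of "x s" "x t"] norm_ge_zero order_trans by blast
  ultimately show ?thesis by (simp add: zero_le_mult_iff)
qed

lemma f_continuous: "continuous_on A f"
proof -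
  have "lipschitz_on L UNIV f"
    using lipschitz lipschitz_nonneg by (auto simp: lipschitz_on_def dist_norm)
  thus ?thesis by (rule continuous_on_subset[OF lipschitz_on_continuous_on]) simp
qed

lemma x_continuous: "continuous_on A x"
  using ode by (meson continuous_at_imp_continuous_on has_vector_derivative_continuous)

lemma continuous_on_x_comp [continuous_intros]:
  "continuous_on A g \<Longrightarrow> continuous_on A (\<lambda>t. x (g t))"
  by (rule continuous_on_compose2[OF x_continuous[of UNIV]]) auto

lemma continuous_on_f_x_comp [continuous_intros]:
  "continuous_on A g \<Longrightarrow> continuous_on A (\<lambda>t. f (x (g t)))"
  by (rule continuous_on_compose2[OF f_continuous[of UNIV]]) (auto intro: continuous_on_x_comp)

lemma x_comp_linear_derivative:
  "((\<lambda>\<theta>. x (a + c * \<theta>)) has_vector_derivative c *\<^sub>R f (x (a + c * \<theta>))) (at \<theta>)"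
proof -
  have "((\<lambda>\<theta>. a + c * \<theta>) has_vector_derivative c) (at \<theta>)"
    unfolding has_real_derivative_iff_has_vector_derivative[symmetric]
    by (auto intro!: derivative_eq_intros)
  from vector_diff_chain_at[OF this ode] show ?thesis by (simp add: o_def)
qed

lemma x_period_back: "x (t - T) = x t"
  using periodic_shift_int[where g = x, OF periodic, of t "-1"] by simp

(* V is a bound for the speed |x'| = |f(x)|; it is finite because x' is continuous and periodic. *)
definition V :: real where
  "V = Sup (range (\<lambda>t. norm (f (x t))))"

lemma speed_le_V: "norm (f (x t)) \<le> V"
proof -
  have "range (\<lambda>t. norm (f (x t))) = (\<lambda>t. norm (f (x t))) ` {0..T}"
    by (rule periodic_range[OF period_pos]) (simp add: periodic)
  moreover have "compact ((\<lambda>t. norm (f (x t))) ` {0..T})"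
    by (intro compact_continuous_image compact_Icc continuous_intros)
  ultimately have "bdd_above (range (\<lambda>t. norm (f (x t))))"
    by (metis compact_imp_bounded bounded_imp_bdd_above)
  thus ?thesis unfolding V_def by (rule cSup_upper[rotated]) simp
qed

lemma x_lipschitz: "norm (x b - x a) \<le> V * \<bar>b - a\<bar>"
proof -
  have "norm (x v - x u) \<le> V * (v - u)" if "u \<le> v" for u v
  proof (rule norm_increment_le_integral[where F' = "\<lambda>t. f (x t)", OF that])
    show "((\<lambda>_. V) has_integral V * (v - u)) {u..v}"
      using has_integral_const_real[of V u v] that by (simp add: mult.commute)
  qed (use speed_le_V in \<open>auto intro: has_vector_derivative_at_within[OF ode]\<close>)
  from this[of a b] this[of b a] show ?thesis
    by (cases "a \<le> b") (auto simp: norm_minus_commute)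
qed

(* D h is the largest displacement of the orbit over a time lag h.  Since the chord length
   s \<mapsto> |x(s+h) - x(s)| is continuous and T-periodic, the supremum is a maximum. *)
definition D :: "real \<Rightarrow> real" where
  "D h = Sup (range (\<lambda>s. norm (x (s + h) - x s)))"

lemma chord_range_compact: "compact (range (\<lambda>s. norm (x (s + h) - x s)))"
proof -
  have "x (s + T + h) = x (s + h)" for s
    using periodic[of "s + h"] by (simp add: ac_simps)
  hence "range (\<lambda>s. norm (x (s + h) - x s)) = (\<lambda>s. norm (x (s + h) - x s)) ` {0..T}"
    by (intro periodic_range[OF period_pos]) (simp add: periodic)
  moreover have "compact ((\<lambda>s. norm (x (s + h) - x s)) ` {0..T})"
    by (intro compact_continuous_image compact_Icc continuous_intros)
  ultimately show ?thesis by simp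
qed

lemma D_upper: "norm (x (s + h) - x s) \<le> D h"
  unfolding D_def using chord_range_compact
  by (intro cSup_upper bounded_imp_bdd_above compact_imp_bounded) auto

lemma D_attained: "\<exists>s. norm (x (s + h) - x s) = D h"
proof -
  have "D h \<in> range (\<lambda>s. norm (x (s + h) - x s))"
    unfolding D_def using chord_range_compact
    by (intro closed_contains_Sup bounded_imp_bdd_above compact_imp_bounded compact_imp_closed) auto
  thus ?thesis by (auto simp: image_iff)
qed

lemma D_nonneg: "0 \<le> D h"
  using D_upper[of 0 h] norm_ge_zero order_trans by blast

lemma D_lipschitz: "D h \<le> D h' + V * \<bar>h - h'\<bar>"
proof -
  obtain s where s: "norm (x (s + h) - x s) = D h" using D_attained by blast
  have "norm (x (s + h) - x s) \<le> norm (x (s + h) - x (s + h')) + norm (x (s + h') - x s)"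
    using norm_triangle_ineq[of "x (s + h) - x (s + h')" "x (s + h') - x s"] by simp
  also have "\<dots> \<le> V * \<bar>h - h'\<bar> + D h'"
    using x_lipschitz[of "s + h'" "s + h"] D_upper[of s h']
    by (simp add: norm_minus_commute abs_minus_commute)
  finally show ?thesis using s by simp
qed

lemma D_continuous: "continuous_on A D"
proof -
  have "0 \<le> V" using speed_le_V[of 0] norm_ge_zero order_trans by blast
  moreover have "\<bar>D h - D h'\<bar> \<le> V * \<bar>h - h'\<bar>" for h h'
    using D_lipschitz[of h h'] D_lipschitz[of h' h] by (simp add: abs_minus_commute abs_le_iff)
  ultimately have "lipschitz_on V UNIV D"
    unfolding lipschitz_on_def dist_real_def by blast
  thus ?thesis by (rule continuous_on_subset[OF lipschitz_on_continuous_on]) simp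
qed

lemma continuous_on_D_comp [continuous_intros]:
  "continuous_on A g \<Longrightarrow> continuous_on A (\<lambda>t. D (g t))"
  by (rule continuous_on_compose2[OF D_continuous[of UNIV]]) auto

lemma D_positive_somewhere: "\<exists>\<theta>\<in>{0..1}. 0 < D (T * \<theta>)"
proof -
  obtain s t where "x t \<noteq> x s" using nonconstant by metis
  have "range (\<lambda>h. x (s + h)) = (\<lambda>h. x (s + h)) ` {0..T}"
    by (rule periodic_range[OF period_pos]) (simp add: periodic add.assoc[symmetric])
  moreover have "x t \<in> range (\<lambda>h. x (s + h))"
    using rangeI[of "\<lambda>h. x (s + h)" "t - s"] by simp
  ultimately obtain h where h: "h \<in> {0..T}" "x (s + h) = x t" by auto
  hence "0 < norm (x (s + h) - x s)" using \<open>x t \<noteq> x s\<close> by simp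
  hence "0 < D h" using D_upper[of s h] by linarith
  moreover have "h / T \<in> {0..1}" "T * (h / T) = h" using h period_pos by auto
  ultimately show ?thesis by (intro bexI[of _ "h / T"]) auto
qed

(* For a base point s and a weight rho the curve theta \<mapsto> interp s rho theta runs from x(s) (theta = 0)
   to x(s + T rho) (theta = 1, by periodicity).  Its velocity is T rho (1 - rho) times the difference
   of f at the two ends of a chord of time lag T theta, so the Lipschitz bound controls it by
   T rho (1 - rho) L D(T theta). *)
definition interp :: "real \<Rightarrow> real \<Rightarrow> real \<Rightarrow> 'a" where
  "interp s \<rho> \<theta> = (1 - \<rho>) *\<^sub>R x (s + T*\<rho>*\<theta>) + \<rho> *\<^sub>R x (s - T*(1-\<rho>)*\<theta>)"

definition interp_velocity :: "real \<Rightarrow> real \<Rightarrow> real \<Rightarrow> 'a" where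
  "interp_velocity s \<rho> \<theta> = (T*\<rho>*(1-\<rho>)) *\<^sub>R (f (x (s + T*\<rho>*\<theta>)) - f (x (s - T*(1-\<rho>)*\<theta>)))"

lemma interp_derivative: "(interp s \<rho> has_vector_derivative interp_velocity s \<rho> \<theta>) (at \<theta>)"
proof -
  have "((\<lambda>\<theta>. (1-\<rho>) *\<^sub>R x (s + (T*\<rho>)*\<theta>) + \<rho> *\<^sub>R x (s + (-(T*(1-\<rho>)))*\<theta>))
          has_vector_derivative
          (1-\<rho>) *\<^sub>R ((T*\<rho>) *\<^sub>R f (x (s + (T*\<rho>)*\<theta>)))
            + \<rho> *\<^sub>R ((-(T*(1-\<rho>))) *\<^sub>R f (x (s + (-(T*(1-\<rho>)))*\<theta>)))) (at \<theta>)"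
    by (intro has_vector_derivative_add
      bounded_linear.has_vector_derivative[OF bounded_linear_scaleR_right] x_comp_linear_derivative)
  thus ?thesis
    unfolding interp_def interp_velocity_def by (simp add: algebra_simps)
qed

lemma interp_0: "interp s \<rho> 0 = x s"
  unfolding interp_def by (simp add: scaleR_left_distrib[symmetric])

lemma interp_1: "interp s \<rho> 1 = x (s + T*\<rho>)"
proof -
  have "x (s - T*(1-\<rho>)) = x (s + T*\<rho>)"
    using x_period_back[of "s + T*\<rho>"] by (simp add: algebra_simps)
  thus ?thesis unfolding interp_def by (simp add: scaleR_left_distrib[symmetric])
qed

lemma chord_le_D: "norm (x (s + T*\<rho>*\<theta>) - x (s - T*(1-\<rho>)*\<theta>)) \<le> D (T*\<theta>)"
proof -
  have e: "s + T*\<rho>*\<theta> = (s - T*(1-\<rho>)*\<theta>) + T*\<theta>" by (simp add: algebra_simps)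
  show ?thesis unfolding e by (rule D_upper)
qed

lemma interp_increment_le:
  assumes \<rho>: "0 \<le> \<rho>" "\<rho> \<le> 1" and ab: "a \<le> b" and g: "(g has_integral I) {a..b}"
    and bound: "\<And>\<theta>. \<theta> \<in> {a..b} \<Longrightarrow>
      T*\<rho>*(1-\<rho>)*L * norm (x (s + T*\<rho>*\<theta>) - x (s - T*(1-\<rho>)*\<theta>)) \<le> g \<theta>"
  shows "norm (interp s \<rho> b - interp s \<rho> a) \<le> I"
proof (rule norm_increment_le_integral[OF ab _ g])
  fix \<theta> assume \<theta>: "\<theta> \<in> {a..b}"
  show "(interp s \<rho> has_vector_derivative interp_velocity s \<rho> \<theta>) (at \<theta> within {a..b})"
    by (rule has_vector_derivative_at_within[OF interp_derivative])
  have "0 \<le> T*\<rho>*(1-\<rho>)" using \<rho> period_pos by simp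
  hence "norm (interp_velocity s \<rho> \<theta>)
      = T*\<rho>*(1-\<rho>) * norm (f (x (s + T*\<rho>*\<theta>)) - f (x (s - T*(1-\<rho>)*\<theta>)))"
    unfolding interp_velocity_def by simp
  also have "\<dots> \<le> T*\<rho>*(1-\<rho>) * (L * norm (x (s + T*\<rho>*\<theta>) - x (s - T*(1-\<rho>)*\<theta>)))"
    by (rule mult_left_mono[OF lipschitz \<open>0 \<le> T*\<rho>*(1-\<rho>)\<close>])
  also have "\<dots> \<le> g \<theta>" using bound[OF \<theta>] by (simp add: mult.assoc)
  finally show "norm (interp_velocity s \<rho> \<theta>) \<le> g \<theta>" .
qed

lemma D_scaled_continuous: "continuous_on A (\<lambda>\<theta>. D (T*\<theta>))"
  by (intro continuous_intros)

definition J :: real where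
  "J = integral {0..1} (\<lambda>\<theta>. D (T*\<theta>))"

lemma D_has_integral_J: "((\<lambda>\<theta>. D (T*\<theta>)) has_integral J) {0..1}"
  unfolding J_def by (intro integrable_integral integrable_continuous_interval continuous_intros)

(* J > 0: otherwise the nonnegative continuous integrand D(T theta) would vanish on [0, 1]. *)
lemma J_pos: "J > 0"
proof -
  obtain \<theta> where \<theta>: "\<theta> \<in> {0..1}" "0 < D (T*\<theta>)"
    using D_positive_somewhere by blast
  have "0 \<le> J" using has_integral_nonneg[OF D_has_integral_J] D_nonneg by simp
  moreover have "J \<noteq> 0"
  proof
    assume "J = 0"
    have "(\<lambda>_. 0) \<theta> = (\<lambda>\<theta>. D (T*\<theta>)) \<theta>"
      by (rule continuous_le_integral_ge_imp_eq[OF zero_less_one continuous_on_const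
            D_scaled_continuous _ has_integral_0 D_has_integral_J])
         (use \<theta> \<open>J = 0\<close> D_nonneg in auto)
    with \<theta> show False by simp
  qed
  ultimately show ?thesis by simp
qed

lemma displacement_bound:
  assumes \<rho>: "0 \<le> \<rho>" "\<rho> \<le> 1"
  shows "D (T*\<rho>) \<le> T*L*J * (\<rho>*(1-\<rho>))"
proof -
  obtain s where s: "norm (x (s + T*\<rho>) - x s) = D (T*\<rho>)" using D_attained by blast
  have c: "0 \<le> T*\<rho>*(1-\<rho>)*L" using \<rho> period_pos lipschitz_nonneg by simp
  have "norm (interp s \<rho> 1 - interp s \<rho> 0) \<le> T*\<rho>*(1-\<rho>)*L * J"
    by (rule interp_increment_le[OF \<rho> _ has_integral_mult_right[OF D_has_integral_J]])
       (use c chord_le_D in \<open>auto intro: mult_left_mono\<close>)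
  thus ?thesis using s by (simp add: interp_0 interp_1 mult_ac)
qed

(* Second integration, over rho: J <= T L J / 6, and J > 0. *)
lemma TL_ge_6: "T * L \<ge> 6"
proof -
  have "J \<le> T*L*J * (1/6)"
    by (rule has_integral_le[OF D_has_integral_J has_integral_mult_right[OF parabola_has_integral_01]])
       (use displacement_bound in auto)
  thus ?thesis using J_pos by (simp add: mult.commute)
qed

lemma D_profile:
  assumes TL: "T * L = 6" and \<theta>: "\<theta> \<in> {0..1}"
  shows "D (T*\<theta>) = 6*J * (\<theta>*(1-\<theta>))"
proof (rule continuous_le_integral_ge_imp_eq[OF zero_less_one D_scaled_continuous _ _
      D_has_integral_J has_integral_mult_right[OF parabola_has_integral_01] _ \<theta>])
  show "D (T*t) \<le> 6*J * (t*(1-t))" if "t \<in> {0..1}" for t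
    using displacement_bound[of t] that TL by simp
  show "continuous_on {0..1} (\<lambda>t. 6*J * (t*(1-t)))" by (intro continuous_intros)
qed simp

lemma extremal_speed_bound:
  assumes TL: "T * L = 6" and \<rho>: "0 \<le> \<rho>" "\<rho> \<le> 1" and \<theta>: "\<theta> \<in> {0..1}"
  shows "T*\<rho>*(1-\<rho>)*L * norm (x (s + T*\<rho>*\<theta>) - x (s - T*(1-\<rho>)*\<theta>))
    \<le> 36*\<rho>*(1-\<rho>)*J * (\<theta>*(1-\<theta>))"
proof -
  have "0 \<le> T*\<rho>*(1-\<rho>)*L" using \<rho> period_pos lipschitz_nonneg by simp
  hence "T*\<rho>*(1-\<rho>)*L * norm (x (s + T*\<rho>*\<theta>) - x (s - T*(1-\<rho>)*\<theta>))
      \<le> T*\<rho>*(1-\<rho>)*L * (6*J * (\<theta>*(1-\<theta>)))"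
    using chord_le_D D_profile[OF TL \<theta>] by (metis mult_left_mono)
  also have "\<dots> = (T*L) * (6*\<rho>*(1-\<rho>)*J) * (\<theta>*(1-\<theta>))" by (simp only: mult_ac)
  finally show ?thesis using TL by simp
qed

lemma symmetric_chords:
  assumes TL: "T * L = 6"
  obtains s0 where "norm (x (s0 + T/2) - x s0) = 3/2 * J"
    and "\<And>\<theta>. \<theta> \<in> {0..1} \<Longrightarrow> norm (x (s0 + T/2*\<theta>) - x (s0 - T/2*\<theta>)) = D (T*\<theta>)"
proof -
  obtain s0 where s0: "norm (x (s0 + T/2) - x s0) = D (T/2)" using D_attained by blast
  have D_half: "D (T/2) = 3/2 * J" using D_profile[OF TL, of "1/2"] by simp
  define g where "g \<theta> = norm (x (s0 + T/2*\<theta>) - x (s0 - T/2*\<theta>))" for \<theta>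
  have g_cont: "continuous_on {0..1} g" unfolding g_def by (intro continuous_intros)
  hence g_int: "(g has_integral integral {0..1} g) {0..1}"
    by (intro integrable_integral integrable_continuous_interval)
  have "norm (interp s0 (1/2) 1 - interp s0 (1/2) 0) \<le> 3/2 * integral {0..1} g"
    by (rule interp_increment_le[OF _ _ _ has_integral_mult_right[OF g_int]])
       (use TL in \<open>auto simp: g_def\<close>)
  hence "J \<le> integral {0..1} g" using s0 D_half by (simp add: interp_0 interp_1)
  moreover have "g \<theta> \<le> D (T*\<theta>)" for \<theta>
    using chord_le_D[of s0 "1/2" \<theta>] by (simp add: g_def)
  ultimately have "g \<theta> = D (T*\<theta>)" if "\<theta> \<in> {0..1}" for \<theta>
    by (intro continuous_le_integral_ge_imp_eq[OF zero_less_one g_cont D_scaled_continuous _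
          g_int D_has_integral_J]) (use that in auto)
  thus ?thesis using that s0 D_half g_def by simp
qed

(* Splitting interp at theta = 1/2, both halves of the increment
   have norm at most 3 rho (1 - rho) J while the whole increment has norm 6 rho (1 - rho) J, so the
   halves are equal. *)
lemma symmetric_sum_affine:
  assumes sc: "strictly_convex_space TYPE('a)" and TL: "T * L = 6"
    and chords: "\<And>\<theta>. \<theta> \<in> {0..1} \<Longrightarrow> norm (x (s0 + T/2*\<theta>) - x (s0 - T/2*\<theta>)) = D (T*\<theta>)"
    and \<rho>: "0 < \<rho>" "\<rho> < 1"
  shows "x (s0 + T/2*\<rho>) + x (s0 - T/2*\<rho>) = 2 *\<^sub>R x s0 + \<rho> *\<^sub>R (2 *\<^sub>R (x (s0 + T/2) - x s0))"
proof -
  define b where "b = s0 - T/2*\<rho>"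
  define m where "m = 3*\<rho>*(1-\<rho>)*J"
  have m: "m > 0" unfolding m_def using \<rho> J_pos by simp
  have \<rho>01: "0 \<le> \<rho>" "\<rho> \<le> 1" using \<rho> by auto
  have half: "norm (interp b \<rho> v - interp b \<rho> u) \<le> m"
    if "0 \<le> u" "u \<le> v" "v \<le> 1" and "((\<lambda>\<theta>. \<theta>*(1-\<theta>)) has_integral 1/12) {u..v}" for u v
  proof -
    have "norm (interp b \<rho> v - interp b \<rho> u) \<le> 36*\<rho>*(1-\<rho>)*J * (1/12)"
      by (rule interp_increment_le[OF \<rho>01 \<open>u \<le> v\<close> has_integral_mult_right[OF that(4)]])
         (use that extremal_speed_bound[OF TL \<rho>01] in auto)
    also have "36*\<rho>*(1-\<rho>)*J * (1/12) = m" unfolding m_def by simp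
    finally show ?thesis .
  qed
  define P Q where "P = interp b \<rho> (1/2) - interp b \<rho> 0" and "Q = interp b \<rho> 1 - interp b \<rho> (1/2)"
  have "norm P \<le> m" unfolding P_def
    by (rule half) (use parabola_has_integral[of 0 "1/2"] in \<open>simp_all add: power2_eq_square power3_eq_cube\<close>)
  moreover have "norm Q \<le> m" unfolding Q_def
    by (rule half) (use parabola_has_integral[of "1/2" 1] in \<open>simp_all add: power2_eq_square power3_eq_cube\<close>)
  moreover have "P + Q = x (s0 + T/2*\<rho>) - x (s0 - T/2*\<rho>)"
    unfolding P_def Q_def b_def by (simp add: interp_0 interp_1 algebra_simps)
  hence "norm (P + Q) = 2 * m"
    using chords[of \<rho>] D_profile[OF TL, of \<rho>] \<rho>01 by (simp add: m_def)
  ultimately have "P = Q" by (rule strictly_convex_equal_summands[OF sc m])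
  hence "x (s0 + T/2*\<rho>) + x (s0 - T/2*\<rho>) = 2 *\<^sub>R interp b \<rho> (1/2)"
    unfolding P_def Q_def b_def by (simp add: interp_0 interp_1 algebra_simps scaleR_2)
  also have "interp b \<rho> (1/2) = (1-\<rho>) *\<^sub>R x s0 + \<rho> *\<^sub>R x (s0 + T/2)"
  proof -
    have "b + T*\<rho>*(1/2) = s0" "b - T*(1-\<rho>)*(1/2) = (s0 + T/2) - T"
      unfolding b_def by (simp_all add: field_simps)
    thus ?thesis unfolding interp_def by (simp only: x_period_back)
  qed
  finally show ?thesis by (simp add: algebra_simps)
qed

(* The even curve above has derivative 0 at rho = 0, so its slope 2 (x(s0 + T/2) - x(s0)) vanishes,
   contradicting D(T/2) = 3J/2 > 0.  Hence T L = 6 is impossible. *)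
theorem period_times_lipschitz_gt_6:
  assumes sc: "strictly_convex_space TYPE('a)"
  shows "T * L > 6"
proof (rule ccontr)
  assume "\<not> T * L > 6"
  hence TL: "T * L = 6" using TL_ge_6 by simp
  obtain s0 where far: "norm (x (s0 + T/2) - x s0) = 3/2 * J"
    and chords: "\<And>\<theta>. \<theta> \<in> {0..1} \<Longrightarrow> norm (x (s0 + T/2*\<theta>) - x (s0 - T/2*\<theta>)) = D (T*\<theta>)"
    using symmetric_chords[OF TL] by blast
  define g where "g \<rho> = x (s0 + T/2*\<rho>) + x (s0 + (-(T/2))*\<rho>)" for \<rho>
  have "((\<lambda>\<rho>. x (s0 + T/2*\<rho>)) has_vector_derivative (T/2) *\<^sub>R f (x (s0 + T/2*0))) (at 0)"
    and "((\<lambda>\<rho>. x (s0 + (-(T/2))*\<rho>)) has_vector_derivative (-(T/2)) *\<^sub>R f (x (s0 + (-(T/2))*0))) (at 0)"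
    by (rule x_comp_linear_derivative)+
  from has_vector_derivative_add[OF this] have "(g has_vector_derivative 0) (at 0)"
    unfolding g_def by simp
  moreover have "g \<rho> = g 0 + \<rho> *\<^sub>R (2 *\<^sub>R (x (s0 + T/2) - x s0))" if "\<rho> \<in> {0<..<1}" for \<rho>
    using symmetric_sum_affine[OF sc TL chords, of \<rho>] that by (simp add: g_def scaleR_2)
  ultimately have "0 = 2 *\<^sub>R (x (s0 + T/2) - x s0)"
    by (rule derivative_at_0_of_right_affine[OF _ zero_less_one])
  hence "x (s0 + T/2) = x s0" by simp
  thus False using far J_pos by simp
qed

end

theorem theorem1:
  fixes f :: "'a::banach \<Rightarrow> 'a" and x :: "real \<Rightarrow> 'a" and L T :: real
  assumes "strictly_convex_space TYPE('a)"
    and "\<And>u v. norm (f u - f v) \<le> L * norm (u - v)"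
    and "T > 0"
    and "\<And>t. (x has_vector_derivative f (x t)) (at t)"
    and "\<And>t. x (t + T) = x t"
    and "\<exists>s t. x s \<noteq> x t"
  shows "T * L > 6"
proof -
  interpret periodic_orbit f x L T
    using assms(2-6) by unfold_locales
  show ?thesis
    using assms(1) by (rule period_times_lipschitz_gt_6)
qed

end
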